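(* Let $S\subseteq M_n$ be a noncommutative graph. Then the minimum defining $\mathcal{H}(S)$ is attained by some $m\in\mathbb{N}$ with $m\leq n^4$ and some $B\in M_m(S)$ with $\sum_{i=1}^m B_{i,i}=I_n$.
   Context: All scalars are complex; $M_n$ denotes complex $n\times n$ matrices. A noncommutative graph is a linear subspace $S\subseteq M_n$ that contains $I_n$ and is closed under conjugate transpose. For a subspace $S\subseteq M_n$, $M_m(S)$ denotes the set of $m\times m$ block matrices $B=[B_{i,j}]_{i,j\in[m]}$ with every block $B_{i,j}\in S$, viewed as elements of $M_{mn}$. The Haemers bound is $\mathcal{H}(S)=\min\{\mathrm{rk}(B):\ m\in\mathbb{N},\ B\in M_m(S),\ \sum_{i=1}^m B_{i,i}=I_n\}$. *)

theory Defs
  imports "Jordan_Normal_Form.DL_Rank"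
begin

definition conj_transpose :: "complex mat \<Rightarrow> complex mat" where
  "conj_transpose A = mat (dim_col A) (dim_row A) (\<lambda>(i,j). cnj (A $$ (j,i)))"

definition subspace_mat :: "nat \<Rightarrow> complex mat set \<Rightarrow> bool" where
  "subspace_mat n S \<longleftrightarrow> S \<subseteq> carrier_mat n n \<and> 0\<^sub>m n n \<in> S \<and>
     (\<forall>A\<in>S. \<forall>B\<in>S. A + B \<in> S) \<and> (\<forall>c::complex. \<forall>A\<in>S. c \<cdot>\<^sub>m A \<in> S)"

definition nc_graph :: "nat \<Rightarrow> complex mat set \<Rightarrow> bool" where
  "nc_graph n S \<longleftrightarrow> subspace_mat n S \<and> 1\<^sub>m n \<in> S \<and> (\<forall>A\<in>S. conj_transpose A \<in> S)"

definition block :: "nat \<Rightarrow> complex mat \<Rightarrow> nat \<Rightarrow> nat \<Rightarrow> complex mat" where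
  "block n B i j = mat n n (\<lambda>(a,b). B $$ (i * n + a, j * n + b))"

text \<open>B belongs to M_m(S) (as an element of M_{mn}).\<close>
definition block_mats :: "nat \<Rightarrow> nat \<Rightarrow> complex mat set \<Rightarrow> complex mat set" where
  "block_mats n m S = {B. B \<in> carrier_mat (m * n) (m * n) \<and>
      (\<forall>i<m. \<forall>j<m. block n B i j \<in> S)}"

definition crank :: "complex mat \<Rightarrow> nat" where
  "crank B = vec_space.rank (dim_row B) B"

definition diag_block_sum :: "nat \<Rightarrow> nat \<Rightarrow> complex mat \<Rightarrow> complex mat" where
  "diag_block_sum n m B = mat n n (\<lambda>(a,b). \<Sum>i<m. block n B i i $$ (a,b))"

definition haemers_feasible :: "nat \<Rightarrow> complex mat set \<Rightarrow> nat \<Rightarrow> complex mat \<Rightarrow> bool" where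
  "haemers_feasible n S m B \<longleftrightarrow> m \<ge> 1 \<and> B \<in> block_mats n m S \<and>
      diag_block_sum n m B = 1\<^sub>m n"

definition haemers :: "nat \<Rightarrow> complex mat set \<Rightarrow> nat" where
  "haemers n S = (LEAST r. \<exists>m B. haemers_feasible n S m B \<and> crank B = r)"

end

theory Submission
  imports Defs
begin

text \<open>
  Let \<open>h = \<H>(S) \<le> n\<close> (the identity is feasible with \<open>m = 1\<close>) and let \<open>B \<in> M\<^sub>m(S)\<close> be feasible
  of rank \<open>h\<close>. Writing \<open>B = F G\<close> with \<open>F\<close> of width \<open>h\<close>, the \<open>m\<close> block rows of \<open>F\<close> live in
  a space of dimension \<open>n h\<close>; so if \<open>m > n h\<close>, some block row \<open>j\<close> of \<open>B\<close> is a linear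
  combination \<open>\<Sum>\<^sub>i\<^sub>\<noteq>\<^sub>j d\<^sub>i (block row i)\<close> of the others. Deleting block row \<open>j\<close> and, for
  every \<open>l \<noteq> j\<close>, replacing block column \<open>l\<close> by itself plus \<open>d\<^sub>l\<close> times block column \<open>j\<close>
  (then deleting block column \<open>j\<close>) does not increase the rank, keeps all blocks in \<open>S\<close>,
  and keeps the sum of the diagonal blocks, since \<open>\<Sum>\<^sub>i\<^sub>\<noteq>\<^sub>j d\<^sub>i B\<^sub>i\<^sub>j = B\<^sub>j\<^sub>j\<close>. Hence an
  optimal \<open>B\<close> with the least number of blocks has \<open>m \<le> n h \<le> n\<^sup>2\<close>.
\<close>

lemma rank_le_of_sum_of_products:
  fixes A :: "'a::field mat"
  assumes "A \<in> carrier_mat N M"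
    and "\<And>x y. x < N \<Longrightarrow> y < M \<Longrightarrow> A $$ (x,y) = (\<Sum>s<r. f s x * g s y)"
  shows "vec_space.rank N A \<le> r"
  using assms
proof (induction r arbitrary: A)
  case 0
  then have "A = 0\<^sub>m N M" by (intro eq_matI) auto
  then show ?case using vec_space.rank_0I by simp
next
  case (Suc r)
  define A1 where "A1 = mat N M (\<lambda>(x,y). \<Sum>s<r. f s x * g s y)"
  define A2 where "A2 = mat N M (\<lambda>(x,y). f r x * g r y)"
  have carrier: "A1 \<in> carrier_mat N M" "A2 \<in> carrier_mat N M" unfolding A1_def A2_def by auto
  have "A = A1 + A2" using Suc.prems by (intro eq_matI) (auto simp: A1_def A2_def)
  moreover have "vec_space.rank N A1 \<le> r" by (rule Suc.IH[OF carrier(1)]) (auto simp: A1_def)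
  moreover have "vec_space.rank N A2 \<le> 1"
    by (rule vec_space.rank_le_1_product_entries[OF carrier(2), of "f r" "g r"]) (auto simp: A2_def)
  moreover have "vec_space.rank N (A1 + A2) \<le> vec_space.rank N A1 + vec_space.rank N A2"
    by (rule vec_space.rank_subadditive[OF carrier])
  ultimately show ?case by simp
qed

lemma rank_factorization:
  fixes A :: "'a::field mat"
  assumes A: "A \<in> carrier_mat N M"
  obtains f g where "\<And>x y. x < N \<Longrightarrow> y < M \<Longrightarrow> A $$ (x,y) = (\<Sum>s<vec_space.rank N A. f s x * g s y)"
proof -
  interpret vs: vec_space "TYPE('a)" N .
  have cols: "set (cols A) \<subseteq> carrier_vec N" using A cols_dim by blast
  obtain W where W: "maximal W (\<lambda>T. T \<subseteq> set (cols A) \<and> vs.lin_indpt T)"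
    using maximal_exists[of "\<lambda>T. T \<subseteq> set (cols A) \<and> vs.lin_indpt T" "card (set (cols A))" "{}"]
    by (meson List.finite_set card_mono empty_iff empty_subsetI vs.finite_lin_indpt2 rev_finite_subset)
  have rank: "vs.rank A = card W" by (rule vs.rank_card_indpt[OF A W])
  have W_cols: "W \<subseteq> set (cols A)" and W_indpt: "vs.lin_indpt W" using W unfolding maximal_def by auto
  have W_fin: "finite W" using W_cols finite_subset by blast
  have W_carrier: "W \<subseteq> carrier_vec N" using W_cols cols by blast
  have in_span: "c \<in> vs.span W" if c: "c \<in> set (cols A)" for c
  proof (rule ccontr)
    assume c_notin: "c \<notin> vs.span W"
    then have "c \<notin> W" using vs.in_own_span[OF W_carrier] by blast
    moreover have "vs.lin_indpt (W \<union> {c})"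
      using vs.lin_dep_iff_in_span[OF W_carrier W_indpt _ \<open>c \<notin> W\<close>] c cols c_notin by blast
    then have "W \<union> {c} = W" using W c W_cols unfolding maximal_def by blast
    ultimately show False by blast
  qed
  have "\<forall>y\<in>{..<M}. \<exists>a. vs.lincomb a W = col A y"
    using vs.finite_in_span[OF W_fin W_carrier in_span] A by (auto simp: cols_def)
  then obtain a where a: "\<And>y. y < M \<Longrightarrow> vs.lincomb (a y) W = col A y" by (metis bchoice lessThan_iff)
  obtain ws where ws: "distinct ws" "set ws = W" using finite_distinct_list[OF W_fin] by blast
  have entries: "A $$ (x,y) = (\<Sum>s<card W. ws ! s $ x * a y (ws ! s))" if xy: "x < N" "y < M" for x y
  proof -
    have "A $$ (x,y) = vs.lincomb (a y) W $ x" using a A xy by simp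
    also have "\<dots> = (\<Sum>w\<in>W. a y w * w $ x)" by (rule vs.lincomb_index[OF xy(1) W_carrier])
    also have "\<dots> = (\<Sum>s<length ws. a y (ws ! s) * ws ! s $ x)"
      unfolding ws(2)[symmetric] sum.distinct_set_conv_list[OF ws(1)]
      by (simp add: sum_list_sum_nth atLeast0LessThan)
    finally show ?thesis using ws distinct_card by (fastforce simp: mult.commute)
  qed
  show thesis by (rule that[of "\<lambda>s x. ws ! s $ x" "\<lambda>s y. a y (ws ! s)"]) (simp add: rank entries)
qed

lemma exists_lin_dep_of_dim_less:
  fixes v :: "nat \<Rightarrow> 'a::field vec"
  assumes v: "\<And>i. i < m \<Longrightarrow> v i \<in> carrier_vec d" and "d < m"
  obtains c j where "j < m" "c j \<noteq> 0" "\<And>t. t < d \<Longrightarrow> (\<Sum>i<m. c i * v i $ t) = 0"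
proof (cases "inj_on v {..<m}")
  case False
  then obtain i j where ij: "i < m" "j < m" "i \<noteq> j" "v i = v j"
    unfolding inj_on_def by auto
  define c where "c k = (if k = i then 1 else if k = j then -1 else (0::'a))" for k
  have "(\<Sum>k<m. c k * v k $ t) = 0" for t
  proof -
    have "(\<Sum>k<m. c k * v k $ t) = (\<Sum>k\<in>{i,j}. c k * v k $ t)"
      using ij by (intro sum.mono_neutral_right) (auto simp: c_def)
    then show ?thesis using ij by (simp add: c_def)
  qed
  moreover have "c i \<noteq> 0" by (simp add: c_def)
  ultimately show thesis using that ij by blast
next
  case True
  interpret vs: vec_space "TYPE('a)" d .
  define V where "V = v ` {..<m}"
  have V_carrier: "V \<subseteq> carrier_vec d" using v by (auto simp: V_def)
  have "vs.lin_dep V"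
  proof (rule ccontr)
    assume "vs.lin_indpt V"
    then have "card V \<le> vs.dim" using vs.li_le_dim(2)[OF vs.fin_dim V_carrier] by simp
    moreover have "card V = m" using True by (simp add: V_def card_image)
    ultimately show False using \<open>d < m\<close> vs.dim_is_n by simp
  qed
  then obtain a w where a: "vs.lincomb a V = 0\<^sub>v d" "w \<in> V" "a w \<noteq> 0"
    using vs.finite_lin_dep[OF _ _ V_carrier] by (auto simp: V_def)
  obtain j where j: "j < m" "w = v j" using a(2) by (auto simp: V_def)
  have "(\<Sum>k<m. a (v k) * v k $ t) = 0" if t: "t < d" for t
  proof -
    have "0 = vs.lincomb a V $ t" using a(1) t by simp
    also have "\<dots> = (\<Sum>x\<in>V. a x * x $ t)" by (rule vs.lincomb_index[OF t V_carrier])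
    also have "\<dots> = (\<Sum>k<m. a (v k) * v k $ t)" unfolding V_def
      by (rule sum.reindex[OF True, unfolded comp_def])
    finally show ?thesis by simp
  qed
  then show thesis using that[of j "\<lambda>k. a (v k)"] j a(3) by blast
qed

lemma solve_sum_mult_eq_0:
  fixes c x :: "nat \<Rightarrow> 'a::field"
  assumes "(\<Sum>i\<in>I. c i * x i) = 0" "finite I" "j \<in> I" "c j \<noteq> 0"
  shows "x j = (\<Sum>i\<in>I - {j}. (- c i / c j) * x i)"
proof -
  have "c j * x j + (\<Sum>i\<in>I - {j}. c i * x i) = 0"
    using assms(1-3) by (simp add: sum.remove)
  then have "(\<Sum>i\<in>I - {j}. c i * x i) = - (c j * x j)" by (simp add: add_eq_0_iff)
  moreover have "(\<Sum>i\<in>I - {j}. (- c i / c j) * x i) = - (\<Sum>i\<in>I - {j}. c i * x i) / c j"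
    by (simp add: sum_divide_distrib sum_negf)
  ultimately show ?thesis using assms(4) by simp
qed

lemma block_index_less: "i < m \<Longrightarrow> a < n \<Longrightarrow> i * n + a < m * (n::nat)"
proof -
  assume "i < m" "a < n"
  then have "i * n + a < (i + 1) * n" by simp
  also have "\<dots> \<le> m * n" using \<open>i < m\<close> by (intro mult_le_mono1) simp
  finally show ?thesis .
qed

lemma block_row_dependency:
  fixes B :: "'a::field mat"
  assumes B: "B \<in> carrier_mat (m * n) M" and small: "n * vec_space.rank (m * n) B < m"
  obtains j d where "j < m"
    "\<And>a y. a < n \<Longrightarrow> y < M \<Longrightarrow> B $$ (j * n + a, y) = (\<Sum>i\<in>{..<m} - {j}. d i * B $$ (i * n + a, y))"
proof -
  define h where "h = vec_space.rank (m * n) B"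
  obtain f g where fg: "\<And>x y. x < m * n \<Longrightarrow> y < M \<Longrightarrow> B $$ (x,y) = (\<Sum>s<h. f s x * g s y)"
    using rank_factorization[OF B] unfolding h_def by blast
  \<comment> \<open>block row \<open>i\<close> of the left factor, flattened to a vector of length \<open>n h\<close>\<close>
  define v where "v i = vec (n * h) (\<lambda>t. f (t mod h) (i * n + t div h))" for i
  have v_carrier: "i < m \<Longrightarrow> v i \<in> carrier_vec (n * h)" for i by (simp add: v_def)
  have "n * h < m" using small by (simp add: h_def)
  then obtain c j where j: "j < m" "c j \<noteq> 0"
    and c: "\<And>t. t < n * h \<Longrightarrow> (\<Sum>i<m. c i * v i $ t) = 0"
    using exists_lin_dep_of_dim_less[of m v "n * h", OF v_carrier] by blast
  have "(\<Sum>i<m. c i * B $$ (i * n + a, y)) = 0" if a: "a < n" and y: "y < M" for a y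
  proof -
    have "(\<Sum>i<m. c i * B $$ (i * n + a, y)) = (\<Sum>i<m. c i * (\<Sum>s<h. f s (i * n + a) * g s y))"
      using fg block_index_less a y by (intro sum.cong) auto
    also have "\<dots> = (\<Sum>s<h. (\<Sum>i<m. c i * f s (i * n + a)) * g s y)"
      by (simp add: sum_distrib_left sum_distrib_right mult.assoc sum.swap[of _ "{..<m}"])
    also have "\<dots> = 0"
    proof (intro sum.neutral ballI)
      fix s assume s: "s \<in> {..<h}"
      then have t: "a * h + s < n * h" using a block_index_less[of a n s h] by simp
      have "(\<Sum>i<m. c i * f s (i * n + a)) = (\<Sum>i<m. c i * v i $ (a * h + s))"
        using t s by (intro sum.cong) (auto simp: v_def)
      then show "(\<Sum>i<m. c i * f s (i * n + a)) * g s y = 0" using c[OF t] by simp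
    qed
    finally show ?thesis .
  qed
  then have "B $$ (j * n + a, y) = (\<Sum>i\<in>{..<m} - {j}. (- c i / c j) * B $$ (i * n + a, y))"
    if "a < n" "y < M" for a y
    using solve_sum_mult_eq_0[of c "\<lambda>i. B $$ (i * n + a, y)" "{..<m}" j] that j by simp
  then show thesis by (rule that[OF j(1)])
qed

definition succ_above :: "nat \<Rightarrow> nat \<Rightarrow> nat" where
  "succ_above j l = (if l < j then l else Suc l)"

lemma succ_above_less: "j < m \<Longrightarrow> l < m - 1 \<Longrightarrow> succ_above j l < m"
  by (auto simp: succ_above_def)

lemma sum_succ_above:
  assumes "j < m"
  shows "(\<Sum>l<m - 1. f (succ_above j l)) = (\<Sum>i\<in>{..<m} - {j}. f i)"
proof -
  have "inj_on (succ_above j) {..<m - 1}" by (auto simp: inj_on_def succ_above_def split: if_splits)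
  moreover have "succ_above j ` {..<m - 1} = {..<m} - {j}"
  proof
    show "succ_above j ` {..<m - 1} \<subseteq> {..<m} - {j}" using assms by (auto simp: succ_above_def)
    show "{..<m} - {j} \<subseteq> succ_above j ` {..<m - 1}"
    proof
      fix i assume i: "i \<in> {..<m} - {j}"
      then have "i = succ_above j (if i < j then i else i - 1)" by (auto simp: succ_above_def)
      moreover have "(if i < j then i else i - 1) < m - 1" using i assms by auto
      ultimately show "i \<in> succ_above j ` {..<m - 1}" by blast
    qed
  qed
  ultimately show ?thesis by (metis sum.reindex_cong)
qed

definition contract_block :: "nat \<Rightarrow> nat \<Rightarrow> nat \<Rightarrow> (nat \<Rightarrow> 'a) \<Rightarrow> 'a::comm_ring_1 mat \<Rightarrow> 'a mat" where
  "contract_block n m j d B = (let \<sigma> = (\<lambda>x. succ_above j (x div n) * n + x mod n) in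
     mat ((m - 1) * n) ((m - 1) * n)
       (\<lambda>(x,y). B $$ (\<sigma> x, \<sigma> y) + d (succ_above j (y div n)) * B $$ (\<sigma> x, j * n + y mod n)))"

lemma block_contract_block:
  assumes "k < m - 1" "l < m - 1"
  shows "block n (contract_block n m j d B) k l =
    block n B (succ_above j k) (succ_above j l) + d (succ_above j l) \<cdot>\<^sub>m block n B (succ_above j k) j"
proof (rule eq_matI)
  fix a b assume "a < dim_row (block n B (succ_above j k) (succ_above j l) + d (succ_above j l) \<cdot>\<^sub>m block n B (succ_above j k) j)"
    "b < dim_col (block n B (succ_above j k) (succ_above j l) + d (succ_above j l) \<cdot>\<^sub>m block n B (succ_above j k) j)"
  then have ab: "a < n" "b < n" by (auto simp: block_def)
  then have "k * n + a < (m - 1) * n" "l * n + b < (m - 1) * n"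
    using block_index_less assms by auto
  then show "block n (contract_block n m j d B) k l $$ (a, b) =
      (block n B (succ_above j k) (succ_above j l) + d (succ_above j l) \<cdot>\<^sub>m block n B (succ_above j k) j) $$ (a, b)"
    using ab by (simp add: block_def contract_block_def)
qed (auto simp: block_def)

lemma contract_block_mem_block_mats:
  assumes S: "subspace_mat n S" and B: "B \<in> block_mats n m S" and "j < m"
  shows "contract_block n m j d B \<in> block_mats n (m - 1) S"
proof -
  have "block n (contract_block n m j d B) k l \<in> S" if "k < m - 1" "l < m - 1" for k l
  proof -
    have "block n B (succ_above j k) (succ_above j l) \<in> S" "block n B (succ_above j k) j \<in> S"
      using B succ_above_less[OF \<open>j < m\<close>] that \<open>j < m\<close> by (auto simp: block_mats_def)
    moreover have "\<And>X Y c. X \<in> S \<Longrightarrow> Y \<in> S \<Longrightarrow> X + c \<cdot>\<^sub>m Y \<in> S"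
      using S unfolding subspace_mat_def by blast
    ultimately show ?thesis unfolding block_contract_block[OF that] by blast
  qed
  then show ?thesis by (auto simp: block_mats_def contract_block_def)
qed

lemma rank_contract_block_le:
  fixes B :: "'a::field mat"
  assumes B: "B \<in> carrier_mat (m * n) (m * n)" and "j < m"
  shows "vec_space.rank ((m - 1) * n) (contract_block n m j d B) \<le> vec_space.rank (m * n) B"
proof -
  define \<sigma> where "\<sigma> x = succ_above j (x div n) * n + x mod n" for x
  define h where "h = vec_space.rank (m * n) B"
  obtain f g where fg: "\<And>x y. x < m * n \<Longrightarrow> y < m * n \<Longrightarrow> B $$ (x,y) = (\<Sum>s<h. f s x * g s y)"
    using rank_factorization[OF B] unfolding h_def by blast
  have \<sigma>_less: "\<sigma> x < m * n" if "x < (m - 1) * n" for x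
  proof -
    have "0 < n" using that by (cases n) auto
    then have "x div n < m - 1" "x mod n < n" using that by (auto simp: less_mult_imp_div_less)
    then show ?thesis unfolding \<sigma>_def using succ_above_less[OF \<open>j < m\<close>] block_index_less by blast
  qed
  have j_less: "j * n + y mod n < m * n" if "y < (m - 1) * n" for y
    using that \<open>j < m\<close> block_index_less by (metis mod_less_divisor mult_0_right not_gr0 not_less0)
  show ?thesis unfolding h_def[symmetric]
  proof (rule rank_le_of_sum_of_products[where f = "\<lambda>s x. f s (\<sigma> x)"
        and g = "\<lambda>s y. g s (\<sigma> y) + d (succ_above j (y div n)) * g s (j * n + y mod n)"])
    fix x y assume xy: "x < (m - 1) * n" "y < (m - 1) * n"
    have "contract_block n m j d B $$ (x, y) =
        B $$ (\<sigma> x, \<sigma> y) + d (succ_above j (y div n)) * B $$ (\<sigma> x, j * n + y mod n)"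
      using xy by (simp add: contract_block_def \<sigma>_def)
    also have "\<dots> = (\<Sum>s<h. f s (\<sigma> x) * (g s (\<sigma> y) + d (succ_above j (y div n)) * g s (j * n + y mod n)))"
      using xy by (simp add: fg \<sigma>_less j_less sum_distrib_left sum.distrib distrib_left mult.left_commute)
    finally show "contract_block n m j d B $$ (x, y) =
        (\<Sum>s<h. f s (\<sigma> x) * (g s (\<sigma> y) + d (succ_above j (y div n)) * g s (j * n + y mod n)))" .
  qed (simp add: contract_block_def)
qed

lemma diag_block_sum_contract_block:
  assumes "j < m"
    and dep: "\<And>a b. a < n \<Longrightarrow> b < n \<Longrightarrow>
      B $$ (j * n + a, j * n + b) = (\<Sum>i\<in>{..<m} - {j}. d i * B $$ (i * n + a, j * n + b))"
  shows "diag_block_sum n (m - 1) (contract_block n m j d B) = diag_block_sum n m B"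
proof (rule eq_matI)
  fix a b assume "a < dim_row (diag_block_sum n m B)" "b < dim_col (diag_block_sum n m B)"
  then have ab: "a < n" "b < n" by (auto simp: diag_block_sum_def)
  define D where "D i = B $$ (i * n + a, i * n + b)" for i
  have "diag_block_sum n (m - 1) (contract_block n m j d B) $$ (a, b) =
      (\<Sum>l<m - 1. block n (contract_block n m j d B) l l $$ (a, b))"
    using ab by (simp add: diag_block_sum_def)
  also have "\<dots> = (\<Sum>l<m - 1. D (succ_above j l) + d (succ_above j l) * B $$ (succ_above j l * n + a, j * n + b))"
  proof (intro sum.cong refl)
    fix l assume "l \<in> {..<m - 1}"
    then show "block n (contract_block n m j d B) l l $$ (a, b) =
        D (succ_above j l) + d (succ_above j l) * B $$ (succ_above j l * n + a, j * n + b)"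
      using ab by (simp add: block_contract_block) (simp add: block_def D_def)
  qed
  also have "\<dots> = (\<Sum>i\<in>{..<m} - {j}. D i) + (\<Sum>i\<in>{..<m} - {j}. d i * B $$ (i * n + a, j * n + b))"
    using sum_succ_above[OF \<open>j < m\<close>, of D]
      sum_succ_above[OF \<open>j < m\<close>, of "\<lambda>i. d i * B $$ (i * n + a, j * n + b)"]
    by (simp add: sum.distrib)
  also have "\<dots> = (\<Sum>i\<in>{..<m} - {j}. D i) + B $$ (j * n + a, j * n + b)"
    using dep[OF ab] by simp
  also have "\<dots> = (\<Sum>i<m. D i)"
    using \<open>j < m\<close> by (simp add: D_def sum.remove[of "{..<m}" j] add.commute)
  also have "\<dots> = diag_block_sum n m B $$ (a, b)"
    using ab by (simp add: diag_block_sum_def block_def D_def)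
  finally show "diag_block_sum n (m - 1) (contract_block n m j d B) $$ (a, b) = diag_block_sum n m B $$ (a, b)" .
qed (auto simp: diag_block_sum_def)

lemma haemers_feasible_contract:
  assumes S: "subspace_mat n S" and B: "haemers_feasible n S m B"
    and small: "n * crank B < m" and "1 < m"
  obtains B' where "haemers_feasible n S (m - 1) B'" "crank B' \<le> crank B"
proof -
  have B_mats: "B \<in> block_mats n m S" and B_diag: "diag_block_sum n m B = 1\<^sub>m n"
    using B unfolding haemers_feasible_def by auto
  have B_carrier: "B \<in> carrier_mat (m * n) (m * n)" using B_mats by (simp add: block_mats_def)
  then have crank_B: "crank B = vec_space.rank (m * n) B" by (simp add: crank_def)
  obtain j d where "j < m" and dep:
    "\<And>a y. a < n \<Longrightarrow> y < m * n \<Longrightarrow> B $$ (j * n + a, y) = (\<Sum>i\<in>{..<m} - {j}. d i * B $$ (i * n + a, y))"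
    using block_row_dependency[OF B_carrier] small unfolding crank_B by blast
  define B' where "B' = contract_block n m j d B"
  have "B' \<in> block_mats n (m - 1) S"
    unfolding B'_def by (rule contract_block_mem_block_mats[OF S B_mats \<open>j < m\<close>])
  moreover have "diag_block_sum n (m - 1) B' = 1\<^sub>m n"
    unfolding B'_def B_diag[symmetric]
    by (rule diag_block_sum_contract_block[OF \<open>j < m\<close> dep]) (use \<open>j < m\<close> block_index_less in auto)
  ultimately have "haemers_feasible n S (m - 1) B'" using \<open>1 < m\<close> by (simp add: haemers_feasible_def)
  moreover have "crank B' \<le> crank B"
    using rank_contract_block_le[OF B_carrier \<open>j < m\<close>]
    by (simp add: crank_def crank_B B'_def contract_block_def carrier_matD(1)[OF B_carrier])
  ultimately show thesis by (rule that)
qed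

lemma haemers_feasible_identity:
  assumes "1\<^sub>m n \<in> S"
  shows "haemers_feasible n S 1 (1\<^sub>m n)"
proof -
  have "block n (1\<^sub>m n) 0 0 = 1\<^sub>m n" by (intro eq_matI) (auto simp: block_def)
  moreover have "diag_block_sum n 1 (1\<^sub>m n) = 1\<^sub>m n"
    by (intro eq_matI) (auto simp: diag_block_sum_def block_def)
  ultimately show ?thesis using assms by (simp add: haemers_feasible_def block_mats_def)
qed

lemma haemers_le_crank: "haemers_feasible n S m B \<Longrightarrow> haemers n S \<le> crank B"
  unfolding haemers_def by (intro Least_le) blast

lemma haemers_attained:
  assumes "1\<^sub>m n \<in> S"
  obtains m B where "haemers_feasible n S m B" "crank B = haemers n S"
  using LeastI_ex[of "\<lambda>r. \<exists>m B. haemers_feasible n S m B \<and> crank B = r"]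
    haemers_feasible_identity[OF assms] that
  unfolding haemers_def by blast

lemma haemers_le_dim:
  assumes "1\<^sub>m n \<in> S"
  shows "haemers n S \<le> n"
proof -
  have "crank (1\<^sub>m n) \<le> n" unfolding crank_def using vec_space.rank_le_nc[of "1\<^sub>m n" n n] by simp
  then show ?thesis using haemers_le_crank[OF haemers_feasible_identity[OF assms]] by simp
qed

theorem mainTheorem4:
  fixes n :: nat and S :: "complex mat set"
  assumes "n \<ge> 1" and "nc_graph n S"
  shows "\<exists>m B. m \<le> n ^ 4 \<and> haemers_feasible n S m B \<and> crank B = haemers n S"
proof -
  have S: "subspace_mat n S" and one: "1\<^sub>m n \<in> S" using assms(2) by (auto simp: nc_graph_def)
  define optimal where "optimal m \<longleftrightarrow> (\<exists>B. haemers_feasible n S m B \<and> crank B = haemers n S)" for m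
  have "\<exists>m. optimal m" using haemers_attained[OF one] unfolding optimal_def by blast
  then obtain m where "optimal m" and fewest: "\<And>m'. m' < m \<Longrightarrow> \<not> optimal m'"
    unfolding exists_least_iff[of optimal] by blast
  then obtain B where B: "haemers_feasible n S m B" "crank B = haemers n S"
    unfolding optimal_def by blast
  have "m \<le> n ^ 4"
  proof (rule ccontr)
    assume "\<not> m \<le> n ^ 4"
    have "n * crank B \<le> n ^ 2" using B(2) haemers_le_dim[OF one] by (simp add: power2_eq_square)
    also have "\<dots> \<le> n ^ 4" using assms(1) by (intro power_increasing) auto
    finally have "n * crank B < m" using \<open>\<not> m \<le> n ^ 4\<close> by simp
    moreover have "1 < m" using \<open>\<not> m \<le> n ^ 4\<close> assms(1) by (meson le_less_trans not_le one_le_power)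
    ultimately obtain B' where B': "haemers_feasible n S (m - 1) B'" "crank B' \<le> crank B"
      using haemers_feasible_contract[OF S B(1)] by blast
    then have "optimal (m - 1)" using B(2) haemers_le_crank[OF B'(1)] unfolding optimal_def by auto
    then show False using fewest \<open>1 < m\<close> by simp
  qed
  then show ?thesis using B by blast
qed

end
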